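(* Let $\pi,\pi'\in\mathbb P$ and let $F:[0,1]\cap\mathbb Q\to\mathbb Q$ be a piecewise linear continuous map with $F(0)=0$ and $F(1)\in a_0^{-1}\mathbb Z$. Assume $\pi(t)=\pi'(t)+F(t)\delta$ for all $t$. Then for each $w\in W$, $(S_w\pi)(t)=(S_w\pi')(t)+F(t)\delta$ for all $t\in[0,1]\cap\mathbb Q$.
   Context: $\mathfrak g$ is an affine Lie algebra over $\mathbb Q$ of affine type with index set $I$, simple coroots $h_j$, fundamental weights $\Lambda_j$, null root $\delta$, $a_0=2$ if $\mathfrak g$ is of type $A^{(2)}_{2\ell}$ and $a_0=1$ otherwise, Weyl group $W=\langle r_j\mid j\in I\rangle$, weight lattice $P=\bigoplus_j\mathbb Z\Lambda_j\oplus\mathbb Za_0^{-1}\delta$. $\mathbb P$ is the set of piecewise linear continuous maps $\pi:[0,1]\cap\mathbb Q\to\mathbb Q\otimes P$ with $\pi(0)=0$, $\pi(1)\in P$. $e_j,f_j$ ($j\in I$) are Littelmann's root operators on $\mathbb P\cup\{\mathbf0\}$. For $j\in I$, $S_j\pi=f_j^n\pi$ if $n=\pi(1)(h_j)\ge0$ and $S_j\pi=e_j^{-n}\pi$ if $n<0$; $w\mapsto S_w$ is the unique action of $W$ on $\mathbb P$ with $S_{r_j}=S_j$ (Littelmann). *)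

theory Defs
  imports Complex_Main
begin

section \<open>Affine generalized Cartan matrices (Kac's conventions)\<close>

text \<open>Index set I is a finite type 'i.  A i j is the Cartan entry a_ij = alpha_j(h_i).\<close>

definition gcm :: "('i \<Rightarrow> 'i \<Rightarrow> int) \<Rightarrow> bool" where
  "gcm A \<longleftrightarrow> (\<forall>i. A i i = 2) \<and> (\<forall>i j. i \<noteq> j \<longrightarrow> A i j \<le> 0)
     \<and> (\<forall>i j. A i j = 0 \<longleftrightarrow> A j i = 0)"

definition indecomposable :: "('i \<Rightarrow> 'i \<Rightarrow> int) \<Rightarrow> bool" where
  "indecomposable A \<longleftrightarrow>
     (\<forall>J. J \<noteq> {} \<and> J \<noteq> UNIV \<longrightarrow> (\<exists>i\<in>J. \<exists>j. j \<notin> J \<and> A i j \<noteq> 0))"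

definition affine_gcm :: "('i::finite \<Rightarrow> 'i \<Rightarrow> int) \<Rightarrow> bool" where
  "affine_gcm A \<longleftrightarrow> gcm A \<and> indecomposable A \<and>
     (\<exists>u :: 'i \<Rightarrow> rat. (\<forall>i. u i > 0) \<and> (\<forall>i. (\<Sum>j\<in>UNIV. of_int (A i j) * u j) = 0))"

text \<open>The labels a_i (delta = sum a_i alpha_i): coprime positive integers with A a = 0.\<close>
definition null_labels :: "('i::finite \<Rightarrow> 'i \<Rightarrow> int) \<Rightarrow> ('i \<Rightarrow> nat) \<Rightarrow> bool" where
  "null_labels A a \<longleftrightarrow> (\<forall>i. a i > 0) \<and> (\<forall>i. (\<Sum>j\<in>UNIV. A i j * int (a j)) = 0)
     \<and> (\<forall>d::nat. (\<forall>i. d dvd a i) \<longrightarrow> d = 1)"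

text \<open>The dual labels a_i^vee (K = sum a_i^vee h_i): labels of the transposed matrix.\<close>
definition dual_labels :: "('i::finite \<Rightarrow> 'i \<Rightarrow> int) \<Rightarrow> ('i \<Rightarrow> nat) \<Rightarrow> bool" where
  "dual_labels A av \<longleftrightarrow> null_labels (\<lambda>i j. A j i) av"

text \<open>The node 0 of Kac's numbering: a_0^vee = 1, and a_0 = 1 unless no node has
  a_i = a_i^vee = 1 (which happens exactly for type A_{2l}^{(2)}, where a_0 = 2).\<close>
definition node0 :: "('i \<Rightarrow> nat) \<Rightarrow> ('i \<Rightarrow> nat) \<Rightarrow> 'i \<Rightarrow> bool" where
  "node0 a av i0 \<longleftrightarrow> av i0 = 1 \<and> (a i0 = 1 \<or> \<not> (\<exists>i. a i = 1 \<and> av i = 1))"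

text \<open>An element of Q \<otimes> P is written sum_j c_j Lambda_j + c delta; we represent it by
  the coefficient function: v (Some j) = c_j, v None = c.\<close>
type_synonym 'i wt = "'i option \<Rightarrow> rat"

definition wadd :: "'i wt \<Rightarrow> 'i wt \<Rightarrow> 'i wt" where
  "wadd v w = (\<lambda>k. v k + w k)"

definition wsmul :: "rat \<Rightarrow> 'i wt \<Rightarrow> 'i wt" where
  "wsmul c v = (\<lambda>k. c * v k)"

definition wzero :: "'i wt" where
  "wzero = (\<lambda>k. 0)"

definition dlt :: "'i wt" where
  "dlt = (\<lambda>k. if k = None then 1 else 0)"

text \<open>Pairing with the simple coroot h_j: Lambda_i(h_j) = [i = j], delta(h_j) = 0.\<close>
definition pair :: "'i wt \<Rightarrow> 'i \<Rightarrow> rat" where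
  "pair v j = v (Some j)"

definition in_P :: "nat \<Rightarrow> 'i wt \<Rightarrow> bool" where
  "in_P a0 v \<longleftrightarrow> (\<forall>j. v (Some j) \<in> \<int>) \<and> of_nat a0 * v None \<in> \<int>"

text \<open>Simple root alpha_j = sum_i a_ij Lambda_i + [j = 0] a_0^{-1} delta
  (Kac: Lambda_i(d) = 0, alpha_i(d) = [i = 0], so delta(d) = a_0).\<close>
definition sroot :: "('i \<Rightarrow> 'i \<Rightarrow> int) \<Rightarrow> 'i \<Rightarrow> nat \<Rightarrow> 'i \<Rightarrow> 'i wt" where
  "sroot A i0 a0 j = (\<lambda>k. case k of Some i \<Rightarrow> of_int (A i j)
                                | None \<Rightarrow> (if j = i0 then 1 / of_nat a0 else 0))"

definition srefl :: "('i \<Rightarrow> 'i \<Rightarrow> int) \<Rightarrow> 'i \<Rightarrow> nat \<Rightarrow> 'i \<Rightarrow> 'i wt \<Rightarrow> 'i wt" where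
  "srefl A i0 a0 j v = wadd v (wsmul (- pair v j) (sroot A i0 a0 j))"

definition refl_word :: "('i \<Rightarrow> 'i \<Rightarrow> int) \<Rightarrow> 'i \<Rightarrow> nat \<Rightarrow> 'i list \<Rightarrow> ('i wt \<Rightarrow> 'i wt)" where
  "refl_word A i0 a0 js = foldr (\<lambda>j g. srefl A i0 a0 j \<circ> g) js id"

text \<open>W = subgroup of GL(Q \<otimes> P) generated by the r_j (a group, since r_j^2 = 1).\<close>
definition weyl :: "('i \<Rightarrow> 'i \<Rightarrow> int) \<Rightarrow> 'i \<Rightarrow> nat \<Rightarrow> ('i wt \<Rightarrow> 'i wt) set" where
  "weyl A i0 a0 = range (refl_word A i0 a0)"

text \<open>Paths are maps [0,1] \<inter> Q \<rightarrow> Q \<otimes> P; represented as functions on rat whose values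
  outside [0,1] are irrelevant.  Piecewise linear (hence continuous) on [0,1]:\<close>
definition pl_on01 :: "(rat \<Rightarrow> 'k \<Rightarrow> rat) \<Rightarrow> bool" where
  "pl_on01 g \<longleftrightarrow> (\<exists>ts. ts \<noteq> [] \<and> hd ts = 0 \<and> last ts = 1 \<and> sorted_wrt (<) ts \<and>
     (\<forall>i < length ts - 1. \<forall>t. ts!i \<le> t \<and> t \<le> ts!(i+1) \<longrightarrow>
        (\<forall>k. g t k = g (ts!i) k + (t - ts!i) / (ts!(i+1) - ts!i) * (g (ts!(i+1)) k - g (ts!i) k))))"

definition pl_scalar :: "(rat \<Rightarrow> rat) \<Rightarrow> bool" where
  "pl_scalar F \<longleftrightarrow> pl_on01 (\<lambda>t (_::unit). F t)"

definition paths :: "nat \<Rightarrow> (rat \<Rightarrow> 'i wt) set" where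
  "paths a0 = {\<pi>. pl_on01 \<pi> \<and> \<pi> 0 = wzero \<and> in_P a0 (\<pi> 1)}"

text \<open>Minimum of g on [a,b] \<inter> Q (it exists for piecewise linear g).\<close>
definition minon :: "(rat \<Rightarrow> rat) \<Rightarrow> rat \<Rightarrow> rat \<Rightarrow> rat" where
  "minon g a b = (THE q. (\<exists>s. a \<le> s \<and> s \<le> b \<and> g s = q) \<and> (\<forall>s. a \<le> s \<and> s \<le> b \<longrightarrow> q \<le> g s))"

text \<open>Littelmann's f_j (Annals 1995, \<section>1), written in closed form: with h(t) = pi(t)(h_j),
  Q = min h, f_j pi = 0 if h(1) - Q < 1, otherwise
  (f_j pi)(t) = pi(t) - min(1, min_{s \<in> [t,1]} h(s) - Q) alpha_j,
  which is the path obtained by applying s_j to the pieces of pi between x_0 and x_1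
  on which h is increasing and equals its right running minimum.  None represents 0.\<close>
definition fop :: "('i \<Rightarrow> 'i \<Rightarrow> int) \<Rightarrow> 'i \<Rightarrow> nat \<Rightarrow> 'i \<Rightarrow> (rat \<Rightarrow> 'i wt) \<Rightarrow> (rat \<Rightarrow> 'i wt) option" where
  "fop A i0 a0 j \<pi> =
     (let h = (\<lambda>t. pair (\<pi> t) j); Q = minon h 0 1 in
      if h 1 - Q < 1 then None
      else Some (\<lambda>t. wadd (\<pi> t) (wsmul (- min 1 (minon h t 1 - Q)) (sroot A i0 a0 j))))"

text \<open>Littelmann's e_j: e_j pi = 0 if Q > -1, otherwise
  (e_j pi)(t) = pi(t) + max(0, Q + 1 - min_{s \<in> [0,t]} h(s)) alpha_j.\<close>
definition eop :: "('i \<Rightarrow> 'i \<Rightarrow> int) \<Rightarrow> 'i \<Rightarrow> nat \<Rightarrow> 'i \<Rightarrow> (rat \<Rightarrow> 'i wt) \<Rightarrow> (rat \<Rightarrow> 'i wt) option" where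
  "eop A i0 a0 j \<pi> =
     (let h = (\<lambda>t. pair (\<pi> t) j); Q = minon h 0 1 in
      if Q > -1 then None
      else Some (\<lambda>t. wadd (\<pi> t) (wsmul (max 0 (Q + 1 - minon h 0 t)) (sroot A i0 a0 j))))"

definition opow :: "(('a \<Rightarrow> 'a option)) \<Rightarrow> nat \<Rightarrow> 'a \<Rightarrow> 'a option" where
  "opow g n x = ((\<lambda>y. Option.bind y g) ^^ n) (Some x)"

text \<open>S_j pi = f_j^n pi if n = pi(1)(h_j) \<ge> 0, and e_j^{-n} pi if n < 0
  (never 0 for pi in the path set, by Littelmann).\<close>
definition Sop :: "('i \<Rightarrow> 'i \<Rightarrow> int) \<Rightarrow> 'i \<Rightarrow> nat \<Rightarrow> 'i \<Rightarrow> (rat \<Rightarrow> 'i wt) \<Rightarrow> (rat \<Rightarrow> 'i wt)" where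
  "Sop A i0 a0 j \<pi> =
     (let n = pair (\<pi> 1) j in
      the (if n \<ge> 0 then opow (fop A i0 a0 j) (nat \<lfloor>n\<rfloor>) \<pi>
           else opow (eop A i0 a0 j) (nat \<lfloor>- n\<rfloor>) \<pi>))"

definition Sword :: "('i \<Rightarrow> 'i \<Rightarrow> int) \<Rightarrow> 'i \<Rightarrow> nat \<Rightarrow> 'i list \<Rightarrow> (rat \<Rightarrow> 'i wt) \<Rightarrow> (rat \<Rightarrow> 'i wt)" where
  "Sword A i0 a0 js = foldr (\<lambda>j g. Sop A i0 a0 j \<circ> g) js id"

text \<open>The action w \<mapsto> S_w: S_w = S_{j_1} ... S_{j_k} for an expression w = r_{j_1} ... r_{j_k}
  (well defined by Littelmann's theorem).\<close>
definition Sw :: "('i \<Rightarrow> 'i \<Rightarrow> int) \<Rightarrow> 'i \<Rightarrow> nat \<Rightarrow> ('i wt \<Rightarrow> 'i wt) \<Rightarrow> (rat \<Rightarrow> 'i wt) \<Rightarrow> (rat \<Rightarrow> 'i wt)" where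
  "Sw A i0 a0 w = Sword A i0 a0 (SOME js. refl_word A i0 a0 js = w)"

end

theory Submission
  imports Defs
begin

(* The root operators see a path only through its pairing h(t) = pi(t)(h_j) with a simple
   coroot, which is blind to delta, and they change the path by adding a multiple of alpha_j
   that is a function of h.  Hence e_j and f_j commute with adding F(t) delta, and so do
   S_j and all S_w.
   The one real point is that S_j is defined through "the": the iterates of e_j and f_j must
   be shown to be nonzero, since otherwise both sides would be the same junk value.  This holds
   for every path whose Lambda-coordinates are piecewise affine and vanish at 0: minima then
   exist, f_j lowers min h by at least 1 while lowering h(1) by 2, and e_j raises min h by at
   most 1.  The invariant survives the operators because running minima of piecewise affine
   functions are again piecewise affine. *)

section \<open>Piecewise affine functions on [0, 1]\<close>

definition affine_on :: "(rat \<Rightarrow> rat) \<Rightarrow> rat \<Rightarrow> rat \<Rightarrow> bool" where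
  "affine_on g x y \<longleftrightarrow> (\<exists>\<alpha> \<beta>. \<forall>z. x \<le> z \<and> z \<le> y \<longrightarrow> g z = \<alpha> + \<beta> * z)"

definition affine_between_breaks :: "rat set \<Rightarrow> (rat \<Rightarrow> rat) \<Rightarrow> bool" where
  "affine_between_breaks S g \<longleftrightarrow> finite S \<and>
     (\<forall>x y. 0 \<le> x \<longrightarrow> x \<le> y \<longrightarrow> y \<le> 1 \<longrightarrow> {x<..<y} \<inter> S = {} \<longrightarrow> affine_on g x y)"

definition piecewise_affine :: "(rat \<Rightarrow> rat) \<Rightarrow> bool" where
  "piecewise_affine g \<longleftrightarrow> (\<exists>S. affine_between_breaks S g)"

lemma affine_between_endpoints:
  fixes a b x y z :: rat
  assumes "x \<le> z" "z \<le> y"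
  shows "min (a + b * x) (a + b * y) \<le> a + b * z \<and> a + b * z \<le> max (a + b * x) (a + b * y)"
proof (cases "b \<ge> 0")
  case True
  then have "b * x \<le> b * z" "b * z \<le> b * y" using assms by (auto intro: mult_left_mono)
  then show ?thesis by auto
next
  case False
  then have "b * z \<le> b * x" "b * y \<le> b * z" using assms by (auto intro: mult_left_mono_neg)
  then show ?thesis by auto
qed

lemma affine_on_subinterval: "affine_on g p q \<Longrightarrow> p \<le> x \<Longrightarrow> y \<le> q \<Longrightarrow> affine_on g x y"
  unfolding affine_on_def by (meson order_trans)

lemma affine_on_cong:
  "affine_on g x y \<Longrightarrow> (\<And>t. x \<le> t \<Longrightarrow> t \<le> y \<Longrightarrow> f t = g t) \<Longrightarrow> affine_on f x y"
  unfolding affine_on_def by simp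

lemma affine_on_point: "affine_on g x x"
  unfolding affine_on_def by (intro exI[of _ "g x"] exI[of _ 0]) auto

lemma affine_on_const: "affine_on (\<lambda>t. c) x y"
  unfolding affine_on_def by (intro exI[of _ c] exI[of _ 0]) auto

lemma affine_on_add:
  assumes "affine_on f x y" "affine_on g x y"
  shows "affine_on (\<lambda>t. f t + g t) x y"
proof -
  obtain a1 b1 a2 b2 where "\<forall>z. x \<le> z \<and> z \<le> y \<longrightarrow> f z = a1 + b1 * z"
    "\<forall>z. x \<le> z \<and> z \<le> y \<longrightarrow> g z = a2 + b2 * z"
    using assms unfolding affine_on_def by blast
  then show ?thesis unfolding affine_on_def
    by (intro exI[of _ "a1 + a2"] exI[of _ "b1 + b2"]) (auto simp: algebra_simps)
qed

lemma affine_on_scale: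
  assumes "affine_on f x y"
  shows "affine_on (\<lambda>t. c * f t) x y"
proof -
  obtain a b where "\<forall>z. x \<le> z \<and> z \<le> y \<longrightarrow> f z = a + b * z"
    using assms unfolding affine_on_def by blast
  then show ?thesis unfolding affine_on_def
    by (intro exI[of _ "c * a"] exI[of _ "c * b"]) (auto simp: algebra_simps)
qed

lemma affine_on_diff:
  "affine_on f x y \<Longrightarrow> affine_on g x y \<Longrightarrow> affine_on (\<lambda>t. f t - g t) x y"
  using affine_on_add[of f x y "\<lambda>t. (-1) * g t"] affine_on_scale[of g x y "-1"] by simp

lemma affine_on_ge_min_endpoints:
  assumes "affine_on g x y" "x \<le> z" "z \<le> y"
  shows "min (g x) (g y) \<le> g z"
proof -
  obtain a b where "\<forall>z. x \<le> z \<and> z \<le> y \<longrightarrow> g z = a + b * z"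
    using assms(1) unfolding affine_on_def by blast
  then show ?thesis using assms affine_between_endpoints[of x z y a b] by auto
qed

lemma affine_on_min:
  assumes "affine_on f x y" "affine_on g x y" "0 \<le> (f x - g x) * (f y - g y)"
  shows "affine_on (\<lambda>t. min (f t) (g t)) x y"
proof -
  obtain a1 b1 a2 b2 where f: "\<And>z. x \<le> z \<Longrightarrow> z \<le> y \<Longrightarrow> f z = a1 + b1 * z"
    and g: "\<And>z. x \<le> z \<Longrightarrow> z \<le> y \<Longrightarrow> g z = a2 + b2 * z"
    using assms(1,2) unfolding affine_on_def by blast
  have d: "f z - g z = (a1 - a2) + (b1 - b2) * z" if "x \<le> z" "z \<le> y" for z
    using f[OF that] g[OF that] by (simp add: algebra_simps)
  have between: "min (f x - g x) (f y - g y) \<le> f z - g z \<and> f z - g z \<le> max (f x - g x) (f y - g y)"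
    if "x \<le> z" "z \<le> y" for z
  proof -
    have "x \<le> y" using that by simp
    show ?thesis
      using affine_between_endpoints[OF that, of "a1 - a2" "b1 - b2"]
      unfolding d[OF order_refl \<open>x \<le> y\<close>] d[OF \<open>x \<le> y\<close> order_refl] d[OF that] .
  qed
  from assms(3) consider "0 \<le> f x - g x" "0 \<le> f y - g y" | "f x - g x \<le> 0" "f y - g y \<le> 0"
    unfolding zero_le_mult_iff by blast
  then show ?thesis
  proof cases
    case 1
    then have "0 \<le> min (f x - g x) (f y - g y)" by simp
    then have "min (f t) (g t) = g t" if "x \<le> t" "t \<le> y" for t
      using between[OF that] by linarith
    then show ?thesis by (rule affine_on_cong[OF assms(2)])
  next
    case 2
    then have "max (f x - g x) (f y - g y) \<le> 0" by simp
    then have "min (f t) (g t) = f t" if "x \<le> t" "t \<le> y" for t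
      using between[OF that] by linarith
    then show ?thesis by (rule affine_on_cong[OF assms(1)])
  qed
qed

(* The zero of the chord of d through p and q. *)
definition crossing :: "(rat \<Rightarrow> rat) \<Rightarrow> rat \<Rightarrow> rat \<Rightarrow> rat" where
  "crossing d p q = p + (q - p) * d p / (d p - d q)"

lemma crossing_between:
  assumes "affine_on d p q" "p \<le> x" "x \<le> y" "y \<le> q" "d x * d y < 0"
  shows "x < crossing d p q \<and> crossing d p q < y"
proof -
  obtain a b where ab: "\<And>z. p \<le> z \<Longrightarrow> z \<le> q \<Longrightarrow> d z = a + b * z"
    using assms(1) unfolding affine_on_def by blast
  have "b \<noteq> 0" using assms(5) ab[of x] ab[of y] assms(2-4) by (auto simp: mult_less_0_iff)
  define z0 where "z0 = - a / b"
  have root: "d z = b * (z - z0)" if "p \<le> z" "z \<le> q" for z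
    using ab[OF that] \<open>b \<noteq> 0\<close> unfolding z0_def by (simp add: algebra_simps)
  have "b * b * ((x - z0) * (y - z0)) < 0"
    using assms(5) root[of x] root[of y] assms(2-4) by (simp add: ac_simps)
  then have "(x - z0) * (y - z0) < 0" using \<open>b \<noteq> 0\<close> by (simp add: mult_less_0_iff)
  then have z0: "x < z0 \<and> z0 < y" using assms(3) by (auto simp: mult_less_0_iff)
  then have "p < q" using assms(2,4) by simp
  have "crossing d p q = p + (q - p) * (b * (p - z0)) / (b * (p - z0) - b * (q - z0))"
    unfolding crossing_def using root[of p] root[of q] \<open>p < q\<close> by simp
  also have "\<dots> = z0" using \<open>b \<noteq> 0\<close> \<open>p < q\<close> by (simp add: field_simps)
  finally show ?thesis using z0 by simp
qed

lemma enclosing_gap: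
  fixes S :: "'a::linorder set"
  assumes "finite S" "a \<in> S" "b \<in> S" "a \<le> x" "x \<le> y" "y \<le> b" "{x<..<y} \<inter> S = {}"
  obtains p q where "p \<in> S" "q \<in> S" "a \<le> p" "p \<le> x" "y \<le> q" "q \<le> b" "{p<..<q} \<inter> S = {}"
proof -
  define P where "P = {s \<in> S. a \<le> s \<and> s \<le> x}"
  define Q where "Q = {s \<in> S. y \<le> s \<and> s \<le> b}"
  have P: "finite P" "a \<in> P" and Q: "finite Q" "b \<in> Q"
    unfolding P_def Q_def using assms by auto
  have p: "Max P \<in> P" and q: "Min Q \<in> Q" using P Q by (auto intro: Max_in Min_in)
  have "{Max P<..<Min Q} \<inter> S = {}"
  proof (rule ccontr)
    assume "{Max P<..<Min Q} \<inter> S \<noteq> {}"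
    then obtain s where s: "s \<in> S" "Max P < s" "s < Min Q" by auto
    have "\<not> s \<le> x"
    proof
      assume "s \<le> x"
      then have "s \<in> P" using s p unfolding P_def by auto
      then show False using Max_ge[OF P(1)] s(2) by fastforce
    qed
    moreover have "\<not> y \<le> s"
    proof
      assume "y \<le> s"
      then have "s \<in> Q" using s q unfolding Q_def by auto
      then show False using Min_le[OF Q(1)] s(3) by fastforce
    qed
    ultimately have "s \<in> {x<..<y} \<inter> S" using s by (simp add: not_le)
    with assms(7) show False by blast
  qed
  then show ?thesis using that p q unfolding P_def Q_def by blast
qed

lemma affine_between_breaksD:
  "affine_between_breaks S g \<Longrightarrow> 0 \<le> x \<Longrightarrow> x \<le> y \<Longrightarrow> y \<le> 1 \<Longrightarrow> {x<..<y} \<inter> S = {} \<Longrightarrow>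
    affine_on g x y"
  unfolding affine_between_breaks_def by blast

lemma piecewise_affine_const: "piecewise_affine (\<lambda>t. c)"
  unfolding piecewise_affine_def affine_between_breaks_def
  by (intro exI[of _ "{}"]) (simp add: affine_on_const)

lemma piecewise_affine_add:
  assumes "piecewise_affine f" "piecewise_affine g"
  shows "piecewise_affine (\<lambda>t. f t + g t)"
proof -
  obtain S T where "affine_between_breaks S f" "affine_between_breaks T g"
    using assms unfolding piecewise_affine_def by blast
  then have "affine_between_breaks (S \<union> T) (\<lambda>t. f t + g t)"
    unfolding affine_between_breaks_def by (simp add: Int_Un_distrib affine_on_add)
  then show ?thesis unfolding piecewise_affine_def by blast
qed

lemma piecewise_affine_scale:
  assumes "piecewise_affine f"
  shows "piecewise_affine (\<lambda>t. c * f t)"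
proof -
  obtain S where "affine_between_breaks S f" using assms unfolding piecewise_affine_def by blast
  then have "affine_between_breaks S (\<lambda>t. c * f t)"
    unfolding affine_between_breaks_def by (simp add: affine_on_scale)
  then show ?thesis unfolding piecewise_affine_def by blast
qed

lemma piecewise_affine_uminus: "piecewise_affine f \<Longrightarrow> piecewise_affine (\<lambda>t. - f t)"
  using piecewise_affine_scale[of f "-1"] by simp

lemma piecewise_affine_diff:
  "piecewise_affine f \<Longrightarrow> piecewise_affine g \<Longrightarrow> piecewise_affine (\<lambda>t. f t - g t)"
  using piecewise_affine_add[of f "\<lambda>t. - g t"] piecewise_affine_uminus[of g] by simp

(* Between consecutive points of S the two affine pieces may cross; adding all the crossing
   points to S makes G affine between consecutive breaks. *)
lemma piecewise_affine_min_of_pieces: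
  fixes f g :: "rat \<Rightarrow> rat \<Rightarrow> rat \<Rightarrow> rat"
  assumes S: "finite S" "0 \<in> S" "1 \<in> S"
    and pieces: "\<And>p q. p \<in> S \<Longrightarrow> q \<in> S \<Longrightarrow> 0 \<le> p \<Longrightarrow> p \<le> q \<Longrightarrow> q \<le> 1 \<Longrightarrow>
       {p<..<q} \<inter> S = {} \<Longrightarrow> affine_on (f p q) p q \<and> affine_on (g p q) p q \<and>
         (\<forall>t. p \<le> t \<and> t \<le> q \<longrightarrow> G t = min (f p q t) (g p q t))"
  shows "piecewise_affine G"
proof -
  define S' where "S' = S \<union> (\<lambda>(p, q). crossing (\<lambda>t. f p q t - g p q t) p q) ` (S \<times> S)"
  have "affine_between_breaks S' G"
    unfolding affine_between_breaks_def
  proof (intro conjI allI impI)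
    show "finite S'" unfolding S'_def using S(1) by simp
    fix x y assume xy: "0 \<le> x" "x \<le> y" "y \<le> 1" "{x<..<y} \<inter> S' = {}"
    then have "{x<..<y} \<inter> S = {}" unfolding S'_def by blast
    then obtain p q where pq: "p \<in> S" "q \<in> S" "0 \<le> p" "p \<le> x" "y \<le> q" "q \<le> 1"
      "{p<..<q} \<inter> S = {}"
      using enclosing_gap[OF S xy(1-3)] by blast
    have f: "affine_on (f p q) p q" and g: "affine_on (g p q) p q"
      and G: "\<And>t. p \<le> t \<Longrightarrow> t \<le> q \<Longrightarrow> G t = min (f p q t) (g p q t)"
      using pieces[OF pq(1-3) _ pq(6,7)] pq(4,5) xy(2) by auto
    define d where "d = (\<lambda>t. f p q t - g p q t)"
    have "\<not> d x * d y < 0"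
    proof
      assume "d x * d y < 0"
      then have "x < crossing d p q \<and> crossing d p q < y"
        using crossing_between[OF _ pq(4) xy(2) pq(5)] affine_on_diff[OF f g] unfolding d_def by blast
      moreover have "crossing d p q \<in> S'" unfolding S'_def d_def using pq(1,2) by force
      ultimately show False using xy(4) by auto
    qed
    then have "affine_on (\<lambda>t. min (f p q t) (g p q t)) x y"
      using affine_on_min[OF affine_on_subinterval[OF f pq(4,5)] affine_on_subinterval[OF g pq(4,5)]]
      unfolding d_def by simp
    then show "affine_on G x y" by (rule affine_on_cong) (use G pq(4,5) in auto)
  qed
  then show ?thesis unfolding piecewise_affine_def by blast
qed

lemma piecewise_affine_min:
  assumes "piecewise_affine f" "piecewise_affine g"
  shows "piecewise_affine (\<lambda>t. min (f t) (g t))"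
proof -
  obtain S T where S: "affine_between_breaks S f" and T: "affine_between_breaks T g"
    using assms unfolding piecewise_affine_def by blast
  show ?thesis
  proof (rule piecewise_affine_min_of_pieces[where S = "S \<union> T \<union> {0, 1}" and f = "\<lambda>p q. f" and g = "\<lambda>p q. g"])
    show "finite (S \<union> T \<union> {0, 1})" using S T unfolding affine_between_breaks_def by simp
    fix p q assume "0 \<le> p" "p \<le> q" "q \<le> 1" "{p<..<q} \<inter> (S \<union> T \<union> {0, 1}) = {}"
    then show "affine_on f p q \<and> affine_on g p q \<and> (\<forall>t. p \<le> t \<and> t \<le> q \<longrightarrow> min (f t) (g t) = min (f t) (g t))"
      using S T unfolding affine_between_breaks_def by (simp add: Int_Un_distrib)
  qed simp_all
qed

lemma piecewise_affine_max:
  assumes "piecewise_affine f" "piecewise_affine g"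
  shows "piecewise_affine (\<lambda>t. max (f t) (g t))"
proof -
  have "piecewise_affine (\<lambda>t. - min (- f t) (- g t))"
    by (intro piecewise_affine_uminus piecewise_affine_min assms)
  then show ?thesis by (simp add: minus_min_eq_max)
qed

lemma piecewise_affine_attains_min:
  assumes "piecewise_affine g" "0 \<le> a" "a \<le> b" "b \<le> 1"
  obtains s where "a \<le> s" "s \<le> b" "\<And>u. a \<le> u \<Longrightarrow> u \<le> b \<Longrightarrow> g s \<le> g u"
proof -
  obtain S where S: "affine_between_breaks S g" using assms(1) unfolding piecewise_affine_def by blast
  define T where "T = insert a (insert b {s \<in> S. a \<le> s \<and> s \<le> b})"
  have T: "finite T" "a \<in> T" "b \<in> T" "T \<noteq> {}" "\<And>s. s \<in> T \<Longrightarrow> a \<le> s \<and> s \<le> b"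
    using S assms(3) unfolding T_def affine_between_breaks_def by auto
  define s where "s = arg_min_on g T"
  have s: "s \<in> T" unfolding s_def by (rule arg_min_if_finite(1)[OF T(1,4)])
  have s_min: "g s \<le> g t" if "t \<in> T" for t unfolding s_def by (rule arg_min_least[OF T(1,4) that])
  have "g s \<le> g u" if u: "a \<le> u" "u \<le> b" for u
  proof -
    obtain x y where xy: "x \<in> T" "y \<in> T" "a \<le> x" "x \<le> u" "u \<le> y" "y \<le> b" "{x<..<y} \<inter> T = {}"
      by (rule enclosing_gap[OF T(1-3) u(1) order_refl u(2)]) simp
    have "{x<..<y} \<inter> S \<subseteq> {x<..<y} \<inter> T" unfolding T_def using xy(3,6) by auto
    then have "{x<..<y} \<inter> S = {}" using xy(7) by blast
    then have "affine_on g x y" using affine_between_breaksD[OF S] xy(3-6) assms(2,4) by simp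
    then have "min (g x) (g y) \<le> g u" using affine_on_ge_min_endpoints xy(4,5) by blast
    then show ?thesis using s_min[OF xy(1)] s_min[OF xy(2)] by linarith
  qed
  moreover have "a \<le> s" "s \<le> b" using T(5)[OF s] by auto
  ultimately show ?thesis using that by blast
qed

section \<open>Minima of piecewise affine functions\<close>

lemma minon_eqI:
  assumes "a \<le> s" "s \<le> b" "\<And>u. a \<le> u \<Longrightarrow> u \<le> b \<Longrightarrow> g s \<le> g u"
  shows "minon g a b = g s"
  unfolding minon_def
proof (rule the_equality)
  show "(\<exists>s'. a \<le> s' \<and> s' \<le> b \<and> g s' = g s) \<and> (\<forall>s'. a \<le> s' \<and> s' \<le> b \<longrightarrow> g s \<le> g s')"
    using assms by blast
qed (use assms in force)

lemma minon_point: "minon g a a = g a"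
  by (rule minon_eqI) auto

lemma minon_cong: "(\<And>s. a \<le> s \<Longrightarrow> s \<le> b \<Longrightarrow> g s = g' s) \<Longrightarrow> minon g a b = minon g' a b"
  unfolding minon_def by (metis (no_types, lifting))

lemma minon_attained:
  assumes "piecewise_affine g" "0 \<le> a" "a \<le> b" "b \<le> 1"
  obtains s where "a \<le> s" "s \<le> b" "g s = minon g a b"
  using piecewise_affine_attains_min[OF assms] minon_eqI by metis

lemma minon_le:
  assumes "piecewise_affine g" "0 \<le> a" "a \<le> u" "u \<le> b" "b \<le> 1"
  shows "minon g a b \<le> g u"
proof -
  obtain s where "a \<le> s" "s \<le> b" "\<And>u. a \<le> u \<Longrightarrow> u \<le> b \<Longrightarrow> g s \<le> g u"
    using piecewise_affine_attains_min[OF assms(1,2) _ assms(5)] assms(3,4) by auto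
  then show ?thesis using minon_eqI assms(3,4) by metis
qed

lemma minon_split:
  assumes "piecewise_affine g" "0 \<le> a" "a \<le> b" "b \<le> c" "c \<le> 1"
  shows "minon g a c = min (minon g a b) (minon g b c)"
proof -
  obtain s where s: "a \<le> s" "s \<le> c" "g s = minon g a c"
    using minon_attained[OF assms(1,2) _ assms(5)] assms(3,4) by auto
  obtain s1 where s1: "a \<le> s1" "s1 \<le> b" "g s1 = minon g a b"
    using minon_attained[OF assms(1,2,3)] assms(4,5) by auto
  obtain s2 where s2: "b \<le> s2" "s2 \<le> c" "g s2 = minon g b c"
    using minon_attained[OF assms(1) _ assms(4,5)] assms(2,3) by auto
  have "minon g a c \<le> minon g a b" "minon g a c \<le> minon g b c"
    using minon_le[OF assms(1,2)] s1 s2 assms by (metis order_trans)+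
  moreover have "min (minon g a b) (minon g b c) \<le> g s"
  proof (cases "s \<le> b")
    case True
    then show ?thesis using minon_le[OF assms(1,2) s(1) True order_trans[OF assms(4,5)]] by simp
  next
    case False
    then have "minon g b c \<le> g s" using minon_le[OF assms(1) _ _ s(2) assms(5)] assms(2,3) by simp
    then show ?thesis by simp
  qed
  ultimately show ?thesis using s(3) by linarith
qed

lemma minon_affine_on:
  assumes "affine_on g a b" "a \<le> b"
  shows "minon g a b = min (g a) (g b)"
proof -
  have bound: "min (g a) (g b) \<le> g u" if "a \<le> u" "u \<le> b" for u
    using affine_on_ge_min_endpoints[OF assms(1) that] .
  show ?thesis
  proof (cases "g a \<le> g b")
    case True
    then show ?thesis using minon_eqI[of a a b g] bound assms(2) by simp
  next
    case False
    then show ?thesis using minon_eqI[of a b b g] bound assms(2) by simp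
  qed
qed

lemma piecewise_affine_right_min:
  assumes h: "piecewise_affine h"
  shows "piecewise_affine (\<lambda>t. minon h t 1)"
proof -
  obtain S where S: "affine_between_breaks S h" using h unfolding piecewise_affine_def by blast
  show ?thesis
  proof (rule piecewise_affine_min_of_pieces[where S = "S \<union> {0, 1}" and f = "\<lambda>p q. h"
        and g = "\<lambda>p q t. minon h q 1"])
    show "finite (S \<union> {0, 1})" using S unfolding affine_between_breaks_def by simp
    fix p q assume pq: "0 \<le> p" "p \<le> q" "q \<le> 1" "{p<..<q} \<inter> (S \<union> {0, 1}) = {}"
    then have affine: "affine_on h p q" using affine_between_breaksD[OF S] by blast
    have eq: "minon h t 1 = min (h t) (minon h q 1)" if t: "p \<le> t" "t \<le> q" for t
    proof -
      have "minon h t 1 = min (minon h t q) (minon h q 1)"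
        using minon_split[OF h, of t q 1] pq t by simp
      moreover have "minon h t q = min (h t) (h q)"
        using minon_affine_on[OF affine_on_subinterval[OF affine t(1) order_refl] t(2)] .
      moreover have "minon h q 1 \<le> h q" using minon_le[OF h] pq by simp
      ultimately show ?thesis by linarith
    qed
    then show "affine_on h p q \<and> affine_on (\<lambda>t. minon h q 1) p q \<and>
        (\<forall>t. p \<le> t \<and> t \<le> q \<longrightarrow> minon h t 1 = min (h t) (minon h q 1))"
      by (intro conjI allI impI affine affine_on_const eq) auto
  qed simp_all
qed

lemma piecewise_affine_left_min:
  assumes h: "piecewise_affine h"
  shows "piecewise_affine (\<lambda>t. minon h 0 t)"
proof -
  obtain S where S: "affine_between_breaks S h" using h unfolding piecewise_affine_def by blast
  show ?thesis
  proof (rule piecewise_affine_min_of_pieces[where S = "S \<union> {0, 1}" and f = "\<lambda>p q. h"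
        and g = "\<lambda>p q t. minon h 0 p"])
    show "finite (S \<union> {0, 1})" using S unfolding affine_between_breaks_def by simp
    fix p q assume pq: "0 \<le> p" "p \<le> q" "q \<le> 1" "{p<..<q} \<inter> (S \<union> {0, 1}) = {}"
    then have affine: "affine_on h p q" using affine_between_breaksD[OF S] by blast
    have eq: "minon h 0 t = min (h t) (minon h 0 p)" if t: "p \<le> t" "t \<le> q" for t
    proof -
      have "minon h 0 t = min (minon h 0 p) (minon h p t)"
        using minon_split[OF h, of 0 p t] pq t by simp
      moreover have "minon h p t = min (h p) (h t)"
        using minon_affine_on[OF affine_on_subinterval[OF affine order_refl t(2)] t(1)] .
      moreover have "minon h 0 p \<le> h p" using minon_le[OF h] pq by simp
      ultimately show ?thesis by linarith
    qed
    then show "affine_on h p q \<and> affine_on (\<lambda>t. minon h 0 p) p q \<and>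
        (\<forall>t. p \<le> t \<and> t \<le> q \<longrightarrow> minon h 0 t = min (h t) (minon h 0 p))"
      by (intro conjI allI impI affine affine_on_const eq) auto
  qed simp_all
qed

lemma affine_on_ivt:
  assumes "affine_on g x y" "x \<le> y" "g x \<le> v" "v \<le> g y"
  obtains s where "x \<le> s" "s \<le> y" "g s = v"
proof (cases "g x = g y")
  case True
  then show ?thesis using that[of x] assms by simp
next
  case False
  obtain \<alpha> \<beta> where ab: "\<And>z. x \<le> z \<Longrightarrow> z \<le> y \<Longrightarrow> g z = \<alpha> + \<beta> * z"
    using assms(1) unfolding affine_on_def by blast
  define c where "c = (v - g x) / (g y - g x)"
  have gxy: "g x < g y" using False assms(3,4) by simp
  then have c: "0 \<le> c" "c \<le> 1" unfolding c_def using assms(3,4) by simp_all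
  define s where "s = x + c * (y - x)"
  have s: "x \<le> s" "s \<le> y"
    unfolding s_def using c assms(2) mult_left_le_one_le[of "y - x" c] by simp_all
  have "g s = g x + c * (g y - g x)"
    using ab[OF s] ab[of x] ab[of y] assms(2) unfolding s_def by (simp add: algebra_simps)
  also have "\<dots> = v" unfolding c_def using gxy by simp
  finally show ?thesis using that s by blast
qed

lemma piecewise_affine_ivt:
  assumes "piecewise_affine g" "0 \<le> a" "a \<le> b" "b \<le> 1" "g a \<le> v" "v \<le> g b"
  obtains s where "a \<le> s" "s \<le> b" "g s = v"
proof -
  obtain S where S: "affine_between_breaks S g" using assms(1) unfolding piecewise_affine_def by blast
  define T where "T = insert a (insert b {s \<in> S. a \<le> s \<and> s \<le> b})"
  have T: "finite T" "a \<in> T" "b \<in> T" "\<And>s. s \<in> T \<Longrightarrow> a \<le> s \<and> s \<le> b"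
    using S assms(3) unfolding T_def affine_between_breaks_def by auto
  define L where "L = {t \<in> T. g t \<le> v}"
  define x where "x = Max L"
  have L: "finite L" "a \<in> L" unfolding L_def using T assms(5) by simp_all
  then have "x \<in> L" unfolding x_def by (intro Max_in) auto
  then have x: "x \<in> T" "g x \<le> v" unfolding L_def by simp_all
  have x_max: "t \<le> x" if "t \<in> T" "g t \<le> v" for t
    using Max_ge[OF L(1)] that unfolding x_def L_def by simp
  define R where "R = {t \<in> T. x \<le> t \<and> v \<le> g t}"
  define y where "y = Min R"
  have R: "finite R" "b \<in> R" unfolding R_def using T x assms(6) by simp_all
  then have "y \<in> R" unfolding y_def by (intro Min_in) auto
  then have y: "y \<in> T" "x \<le> y" "v \<le> g y" unfolding R_def by simp_all
  have y_min: "y \<le> t" if "t \<in> T" "x \<le> t" "v \<le> g t" for t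
    using Min_le[OF R(1)] that unfolding y_def R_def by simp
  have "{x<..<y} \<inter> S = {}"
  proof (rule ccontr)
    assume "{x<..<y} \<inter> S \<noteq> {}"
    then obtain t where t: "t \<in> S" "x < t" "t < y" by auto
    then have "t \<in> T" using T(4)[OF x(1)] T(4)[OF y(1)] unfolding T_def by simp
    show False
    proof (cases "g t \<le> v")
      case True
      then show False using x_max[OF \<open>t \<in> T\<close>] t(2) by simp
    next
      case False
      then show False using y_min[OF \<open>t \<in> T\<close>] t(2,3) by simp
    qed
  qed
  moreover have "0 \<le> x" "y \<le> 1" using T(4)[OF x(1)] T(4)[OF y(1)] assms(2,4) by auto
  ultimately have "affine_on g x y" using affine_between_breaksD[OF S _ y(2)] by simp
  then obtain s where "x \<le> s" "s \<le> y" "g s = v" by (rule affine_on_ivt[OF _ y(2) x(2) y(3)])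
  moreover have "a \<le> x" "y \<le> b" using T(4)[OF x(1)] T(4)[OF y(1)] by auto
  ultimately have "a \<le> s" "s \<le> b" "g s = v" by auto
  then show ?thesis by (rule that)
qed

lemma piecewise_affine_ivt_down:
  assumes "piecewise_affine g" "0 \<le> a" "a \<le> b" "b \<le> 1" "g b \<le> v" "v \<le> g a"
  obtains s where "a \<le> s" "s \<le> b" "g s = v"
proof -
  obtain s where "a \<le> s" "s \<le> b" "- g s = - v"
    using piecewise_affine_ivt[OF piecewise_affine_uminus[OF assms(1)] assms(2-4), of "- v"] assms(5,6)
    by auto
  then show ?thesis using that by simp
qed

lemma right_min_meets:
  assumes h: "piecewise_affine h" and "minon h 0 1 \<le> v" "v \<le> h 1"
  obtains s where "0 \<le> s" "s \<le> 1" "h s = v" "minon h s 1 = v"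
proof -
  obtain s where s: "0 \<le> s" "s \<le> 1" "minon h s 1 = v"
    using piecewise_affine_ivt[OF piecewise_affine_right_min[OF h], of 0 1 v] assms(2,3)
    by (auto simp: minon_point)
  obtain s' where s': "s \<le> s'" "s' \<le> 1" "h s' = minon h s 1"
    using minon_attained[OF h s(1,2) order_refl] .
  have "minon h s 1 \<le> minon h s' 1" using minon_split[OF h, of s s' 1] s s' by simp
  moreover have "minon h s' 1 \<le> h s'" using minon_le[OF h, of s' s' 1] s s' by simp
  ultimately show ?thesis using that[of s'] s s' by simp
qed

lemma left_min_meets:
  assumes h: "piecewise_affine h" and "minon h 0 1 \<le> v" "v \<le> h 0"
  obtains s where "0 \<le> s" "s \<le> 1" "h s = v" "minon h 0 s = v"
proof -
  obtain s where s: "0 \<le> s" "s \<le> 1" "minon h 0 s = v"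
    using piecewise_affine_ivt_down[OF piecewise_affine_left_min[OF h], of 0 1 v] assms(2,3)
    by (auto simp: minon_point)
  obtain s' where s': "0 \<le> s'" "s' \<le> s" "h s' = minon h 0 s"
    using minon_attained[OF h order_refl s(1,2)] .
  have "minon h 0 s \<le> minon h 0 s'" using minon_split[OF h, of 0 s' s] s s' by simp
  moreover have "minon h 0 s' \<le> h s'" using minon_le[OF h, of 0 s' s'] s s' by simp
  ultimately show ?thesis using that[of s'] s s' by simp
qed

lemma sorted_wrt_less_consecutive:
  fixes ts :: "'a::order list"
  assumes "sorted_wrt (<) ts" "i < length ts" "k < length ts" "ts ! i < ts ! k"
    and "{ts ! i<..<ts ! k} \<inter> set ts = {}"
  shows "k = Suc i"
proof -
  have "i < k"
  proof (rule ccontr)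
    assume "\<not> i < k"
    then consider "k = i" | "k < i" by linarith
    then show False using sorted_wrt_nth_less[OF assms(1), of k i] assms(2,4) by cases auto
  qed
  show ?thesis
  proof (rule ccontr)
    assume "k \<noteq> Suc i"
    with \<open>i < k\<close> have "ts ! i < ts ! Suc i" "ts ! Suc i < ts ! k"
      using sorted_wrt_nth_less[OF assms(1)] assms(3) by simp_all
    moreover have "ts ! Suc i \<in> set ts" using \<open>i < k\<close> \<open>k \<noteq> Suc i\<close> assms(3) by simp
    ultimately show False using assms(5) by auto
  qed
qed

lemma piecewise_affine_pl_on01:
  assumes "pl_on01 g"
  shows "piecewise_affine (\<lambda>t. g t k)"
proof -
  obtain ts where ts: "ts \<noteq> []" "hd ts = 0" "last ts = 1" "sorted_wrt (<) ts"
    and seg: "\<forall>i < length ts - 1. \<forall>t. ts!i \<le> t \<and> t \<le> ts!(i+1) \<longrightarrow>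
        (\<forall>k. g t k = g (ts!i) k + (t - ts!i) / (ts!(i+1) - ts!i) * (g (ts!(i+1)) k - g (ts!i) k))"
    using assms unfolding pl_on01_def by blast
  have ends: "0 \<in> set ts" "1 \<in> set ts"
    using hd_in_set[OF ts(1)] last_in_set[OF ts(1)] ts(2,3) by simp_all
  have "affine_between_breaks (set ts) (\<lambda>t. g t k)"
    unfolding affine_between_breaks_def
  proof (intro conjI allI impI)
    fix x y assume xy: "0 \<le> x" "x \<le> y" "y \<le> 1" "{x<..<y} \<inter> set ts = {}"
    obtain p q where pq: "p \<in> set ts" "q \<in> set ts" "0 \<le> p" "p \<le> x" "y \<le> q" "q \<le> 1"
      "{p<..<q} \<inter> set ts = {}"
      by (rule enclosing_gap[OF _ ends xy]) simp
    show "affine_on (\<lambda>t. g t k) x y"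
    proof (cases "p < q")
      case False
      then have "x = y" using pq(4,5) xy(2) by simp
      then show ?thesis using affine_on_point by simp
    next
      case True
      obtain i where i: "i < length ts" "ts ! i = p" using pq(1) by (auto simp: in_set_conv_nth)
      obtain l where l: "l < length ts" "ts ! l = q" using pq(2) by (auto simp: in_set_conv_nth)
      then have "l = Suc i" using sorted_wrt_less_consecutive[OF ts(4) i(1) l(1)] True pq(7) i(2) l(2) by simp
      then have "i < length ts - 1" using l(1) by simp
      define \<beta> where "\<beta> = (g q k - g p k) / (q - p)"
      have "g t k = (g p k - p * \<beta>) + \<beta> * t" if "p \<le> t" "t \<le> q" for t
      proof -
        have "ts ! i \<le> t \<and> t \<le> ts ! (i + 1)" using that i(2) l(2) \<open>l = Suc i\<close> by simp
        then have "g t k = g (ts!i) k + (t - ts!i) / (ts!(i+1) - ts!i) * (g (ts!(i+1)) k - g (ts!i) k)"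
          using seg \<open>i < length ts - 1\<close> by blast
        also have "\<dots> = g p k + (t - p) * \<beta>" using i(2) l(2) \<open>l = Suc i\<close> unfolding \<beta>_def by simp
        finally show ?thesis by (simp add: algebra_simps)
      qed
      then have "affine_on (\<lambda>t. g t k) p q" unfolding affine_on_def by blast
      then show ?thesis using affine_on_subinterval pq(4,5) by blast
    qed
  qed simp
  then show ?thesis unfolding piecewise_affine_def by blast
qed

section \<open>Root operators on piecewise affine paths\<close>

definition pair_path :: "(rat \<Rightarrow> 'i wt) \<Rightarrow> 'i \<Rightarrow> rat \<Rightarrow> rat" where
  "pair_path p j = (\<lambda>t. pair (p t) j)"

definition path_min :: "(rat \<Rightarrow> 'i wt) \<Rightarrow> 'i \<Rightarrow> rat" where
  "path_min p j = minon (pair_path p j) 0 1"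

definition pl_path :: "(rat \<Rightarrow> 'i wt) \<Rightarrow> bool" where
  "pl_path p \<longleftrightarrow> (\<forall>k. piecewise_affine (pair_path p k) \<and> pair_path p k 0 = 0)"

lemma pl_path_paths: "\<pi> \<in> paths a0 \<Longrightarrow> pl_path \<pi>"
  unfolding paths_def pl_path_def pair_path_def pair_def wzero_def
  using piecewise_affine_pl_on01 by auto

lemma path_min_le:
  "pl_path p \<Longrightarrow> 0 \<le> t \<Longrightarrow> t \<le> 1 \<Longrightarrow> path_min p j \<le> pair_path p j t"
  unfolding pl_path_def path_min_def using minon_le by simp

lemma pair_path_add_root:
  "pair_path (\<lambda>t. wadd (p t) (wsmul (c t) (sroot A i0 a0 j))) k =
     (\<lambda>t. pair_path p k t + of_int (A k j) * c t)"
  unfolding pair_path_def pair_def wadd_def wsmul_def sroot_def by (simp add: mult.commute)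

lemma pl_path_add_root:
  assumes "pl_path p" "piecewise_affine c" "c 0 = 0"
  shows "pl_path (\<lambda>t. wadd (p t) (wsmul (c t) (sroot A i0 a0 j)))"
  using assms unfolding pl_path_def pair_path_add_root
  by (simp add: piecewise_affine_add piecewise_affine_scale)

lemma fop_step:
  assumes p: "pl_path p" and Ajj: "A j j = 2" and "1 \<le> pair_path p j 1 - path_min p j"
  obtains p1 where "fop A i0 a0 j p = Some p1" "pl_path p1"
    "pair_path p1 j 1 = pair_path p j 1 - 2" "path_min p1 j \<le> path_min p j - 1"
proof -
  define h where "h = pair_path p j"
  define Q where "Q = path_min p j"
  define c where "c = (\<lambda>t. - min 1 (minon h t 1 - Q))"
  define p1 where "p1 = (\<lambda>t. wadd (p t) (wsmul (c t) (sroot A i0 a0 j)))"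
  have h: "piecewise_affine h" using p unfolding h_def pl_path_def by blast
  have Q: "Q = minon h 0 1" unfolding Q_def h_def path_min_def ..
  have h1: "pair_path p1 j = (\<lambda>t. h t + 2 * c t)"
    unfolding p1_def pair_path_add_root Ajj h_def by simp
  have "fop A i0 a0 j p = Some p1"
    using assms(3) unfolding fop_def Let_def p1_def c_def Q h_def path_min_def pair_path_def by simp
  moreover have "pl_path p1"
    unfolding p1_def using p
  proof (rule pl_path_add_root)
    show "piecewise_affine c" unfolding c_def
      by (intro piecewise_affine_uminus piecewise_affine_min piecewise_affine_const
          piecewise_affine_diff piecewise_affine_right_min h)
    show "c 0 = 0" unfolding c_def Q by simp
  qed
  moreover have "pair_path p1 j 1 = pair_path p j 1 - 2"
    using assms(3) unfolding h1 c_def h_def Q_def by (simp add: minon_point)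
  moreover have "path_min p1 j \<le> Q - 1"
  proof -
    have "minon h 0 1 \<le> Q + 1" "Q + 1 \<le> h 1" using Q assms(3) unfolding Q_def h_def by simp_all
    then obtain s where s: "0 \<le> s" "s \<le> 1" "h s = Q + 1" "minon h s 1 = Q + 1"
      by (rule right_min_meets[OF h])
    then have "pair_path p1 j s = Q - 1" unfolding h1 c_def by simp
    then show ?thesis using path_min_le[OF \<open>pl_path p1\<close> s(1,2), of j] by linarith
  qed
  ultimately show ?thesis using that unfolding Q_def by blast
qed

lemma eop_step:
  assumes p: "pl_path p" and Ajj: "A j j = 2" and "path_min p j \<le> -1"
  obtains p1 where "eop A i0 a0 j p = Some p1" "pl_path p1" "path_min p1 j \<le> path_min p j + 1"
proof -
  define h where "h = pair_path p j"
  define Q where "Q = path_min p j"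
  define c where "c = (\<lambda>t. max 0 (Q + 1 - minon h 0 t))"
  define p1 where "p1 = (\<lambda>t. wadd (p t) (wsmul (c t) (sroot A i0 a0 j)))"
  have h: "piecewise_affine h" and h0: "h 0 = 0" using p unfolding h_def pl_path_def by blast+
  have Q: "Q = minon h 0 1" unfolding Q_def h_def path_min_def ..
  have h1: "pair_path p1 j = (\<lambda>t. h t + 2 * c t)"
    unfolding p1_def pair_path_add_root Ajj h_def by simp
  have "eop A i0 a0 j p = Some p1"
    using assms(3) unfolding eop_def Let_def p1_def c_def Q h_def path_min_def pair_path_def by simp
  moreover have "pl_path p1"
    unfolding p1_def using p
  proof (rule pl_path_add_root)
    show "piecewise_affine c" unfolding c_def
      by (intro piecewise_affine_max piecewise_affine_const piecewise_affine_diff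
          piecewise_affine_left_min h)
    show "c 0 = 0" using assms(3) unfolding c_def Q_def by (simp add: minon_point h0)
  qed
  moreover have "path_min p1 j \<le> Q + 1"
  proof -
    have "minon h 0 1 \<le> Q + 1" "Q + 1 \<le> h 0" using Q assms(3) h0 unfolding Q_def by simp_all
    then obtain s where s: "0 \<le> s" "s \<le> 1" "h s = Q + 1" "minon h 0 s = Q + 1"
      by (rule left_min_meets[OF h])
    then have "pair_path p1 j s = Q + 1" unfolding h1 c_def by simp
    then show ?thesis using path_min_le[OF \<open>pl_path p1\<close> s(1,2), of j] by linarith
  qed
  ultimately show ?thesis using that unfolding Q_def by blast
qed

lemma opow_0: "opow g 0 x = Some x"
  unfolding opow_def by simp

lemma opow_Suc: "opow g (Suc k) x = Option.bind (g x) (opow g k)"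
proof -
  have none: "((\<lambda>y. Option.bind y g) ^^ n) None = None" for n
    by (induction n) simp_all
  show ?thesis unfolding opow_def funpow_Suc_right by (cases "g x") (simp_all add: none)
qed

lemma opow_fop_defined:
  assumes "pl_path p" "A j j = 2" "of_nat k \<le> pair_path p j 1 - path_min p j"
  shows "\<exists>r. opow (fop A i0 a0 j) k p = Some r \<and> pl_path r"
  using assms(1,3)
proof (induction k arbitrary: p)
  case 0
  then show ?case by (simp add: opow_0)
next
  case (Suc k)
  have "(0::rat) \<le> of_nat k" by simp
  then have "1 \<le> pair_path p j 1 - path_min p j" using Suc.prems(2) by simp
  then obtain p1 where "fop A i0 a0 j p = Some p1" "pl_path p1"
    "pair_path p1 j 1 = pair_path p j 1 - 2" "path_min p1 j \<le> path_min p j - 1"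
    by (rule fop_step[where A = A and j = j, OF Suc.prems(1) assms(2)])
  then show ?case using Suc.IH[of p1] Suc.prems(2) by (simp add: opow_Suc)
qed

lemma opow_eop_defined:
  assumes "pl_path p" "A j j = 2" "of_nat k + path_min p j \<le> 0"
  shows "\<exists>r. opow (eop A i0 a0 j) k p = Some r \<and> pl_path r"
  using assms(1,3)
proof (induction k arbitrary: p)
  case 0
  then show ?case by (simp add: opow_0)
next
  case (Suc k)
  have "path_min p j \<le> -1" using Suc.prems(2) by simp
  then obtain p1 where "eop A i0 a0 j p = Some p1" "pl_path p1" "path_min p1 j \<le> path_min p j + 1"
    by (rule eop_step[where A = A and j = j, OF Suc.prems(1) assms(2)])
  then show ?case using Suc.IH[of p1] Suc.prems(2) by (simp add: opow_Suc)
qed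

lemma opow_rel:
  assumes "\<And>x y. R x y \<Longrightarrow> rel_option R (g x) (g y)" "R x y"
  shows "rel_option R (opow g k x) (opow g k y)"
  using assms(2)
proof (induction k arbitrary: x y)
  case 0
  then show ?case by (simp add: opow_0)
next
  case (Suc k)
  from assms(1)[OF Suc.prems] show ?case
    by (cases "g x"; cases "g y") (simp_all add: opow_Suc Suc.IH)
qed

section \<open>Translation by multiples of the null root\<close>

definition delta_shift :: "(rat \<Rightarrow> rat) \<Rightarrow> (rat \<Rightarrow> 'i wt) \<Rightarrow> (rat \<Rightarrow> 'i wt) \<Rightarrow> bool" where
  "delta_shift F p p' \<longleftrightarrow> (\<forall>t. 0 \<le> t \<and> t \<le> 1 \<longrightarrow> p t = wadd (p' t) (wsmul (F t) dlt))"

lemma delta_shift_pair_path: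
  "delta_shift F p p' \<Longrightarrow> 0 \<le> t \<Longrightarrow> t \<le> 1 \<Longrightarrow> pair_path p j t = pair_path p' j t"
  unfolding delta_shift_def pair_path_def pair_def wadd_def wsmul_def dlt_def by simp

lemma delta_shift_add:
  assumes "delta_shift F p p'" "\<And>t. 0 \<le> t \<Longrightarrow> t \<le> 1 \<Longrightarrow> c t = c' t"
  shows "delta_shift F (\<lambda>t. wadd (p t) (wsmul (c t) v)) (\<lambda>t. wadd (p' t) (wsmul (c' t) v))"
  using assms unfolding delta_shift_def wadd_def by (simp add: fun_eq_iff)

lemma fop_delta_shift:
  assumes "delta_shift F p p'"
  shows "rel_option (delta_shift F) (fop A i0 a0 j p) (fop A i0 a0 j p')"
proof -
  have m: "minon (pair_path p j) t 1 = minon (pair_path p' j) t 1" if "0 \<le> t" for t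
    by (rule minon_cong) (use delta_shift_pair_path[OF assms] that in simp)
  have "pair_path p j 1 = pair_path p' j 1" using delta_shift_pair_path[OF assms] by simp
  then show ?thesis
    unfolding fop_def Let_def pair_path_def[symmetric]
    using delta_shift_add[OF assms] m by simp
qed

lemma eop_delta_shift:
  assumes "delta_shift F p p'"
  shows "rel_option (delta_shift F) (eop A i0 a0 j p) (eop A i0 a0 j p')"
proof -
  have m: "minon (pair_path p j) 0 t = minon (pair_path p' j) 0 t" if "t \<le> 1" for t
    by (rule minon_cong) (use delta_shift_pair_path[OF assms] that in simp)
  show ?thesis
    unfolding eop_def Let_def pair_path_def[symmetric]
    using delta_shift_add[OF assms] m by simp
qed

lemma Sop_step:
  assumes p: "pl_path p" and shift: "delta_shift F p p'" and Ajj: "A j j = 2"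
  shows "pl_path (Sop A i0 a0 j p) \<and> delta_shift F (Sop A i0 a0 j p) (Sop A i0 a0 j p')"
proof -
  define n where "n = pair_path p j 1"
  define iterate where "iterate q = (if n \<ge> 0 then opow (fop A i0 a0 j) (nat \<lfloor>n\<rfloor>) q
                               else opow (eop A i0 a0 j) (nat \<lfloor>- n\<rfloor>) q)" for q
  have "pair_path p' j 1 = n" unfolding n_def using delta_shift_pair_path[OF shift] by simp
  then have S: "Sop A i0 a0 j p = the (iterate p)" "Sop A i0 a0 j p' = the (iterate p')"
    unfolding Sop_def Let_def iterate_def n_def pair_path_def by simp_all
  have "path_min p j \<le> 0" "path_min p j \<le> n"
    using path_min_le[OF p, of 0 j] path_min_le[OF p, of 1 j] p unfolding n_def pl_path_def by simp_all
  have "\<exists>r. iterate p = Some r \<and> pl_path r"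
  proof (cases "n \<ge> 0")
    case True
    then have "of_nat (nat \<lfloor>n\<rfloor>) \<le> pair_path p j 1 - path_min p j"
      using of_nat_floor[OF True] \<open>path_min p j \<le> 0\<close> unfolding n_def by simp
    then show ?thesis using opow_fop_defined[where A = A and j = j, OF p Ajj] True unfolding iterate_def by simp
  next
    case False
    then have "of_nat (nat \<lfloor>- n\<rfloor>) \<le> - n" by (intro of_nat_floor) simp
    then have "of_nat (nat \<lfloor>- n\<rfloor>) + path_min p j \<le> 0" using \<open>path_min p j \<le> n\<close> by linarith
    then show ?thesis using opow_eop_defined[where A = A and j = j, OF p Ajj] False unfolding iterate_def by simp
  qed
  moreover have "rel_option (delta_shift F) (iterate p) (iterate p')"
    unfolding iterate_def
    using opow_rel[where R = "delta_shift F" and g = "fop A i0 a0 j", OF fop_delta_shift shift]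
      opow_rel[where R = "delta_shift F" and g = "eop A i0 a0 j", OF eop_delta_shift shift]
    by simp
  ultimately show ?thesis using S by (auto simp: option_rel_Some1)
qed

lemma Sword_step:
  assumes "pl_path p" "delta_shift F p p'" "\<forall>j. A j j = 2"
  shows "pl_path (Sword A i0 a0 js p) \<and> delta_shift F (Sword A i0 a0 js p) (Sword A i0 a0 js p')"
proof (induction js)
  case Nil
  then show ?case using assms(1,2) by (simp add: Sword_def)
next
  case (Cons j js)
  have "Sword A i0 a0 (j # js) q = Sop A i0 a0 j (Sword A i0 a0 js q)" for q
    by (simp add: Sword_def)
  then show ?case
    using Sop_step[where A = A and j = j, OF Cons.IH[THEN conjunct1] Cons.IH[THEN conjunct2]] assms(3)
    by simp
qed

theorem lemma2p27:
  fixes A :: "'i::finite \<Rightarrow> 'i \<Rightarrow> int"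
    and a av :: "'i \<Rightarrow> nat" and i0 :: 'i
    and \<pi> \<pi>' :: "rat \<Rightarrow> 'i wt" and F :: "rat \<Rightarrow> rat"
  assumes "affine_gcm A" and "null_labels A a" and "dual_labels A av" and "node0 a av i0"
    and "\<pi> \<in> paths (a i0)" and "\<pi>' \<in> paths (a i0)"
    and "pl_scalar F" and "F 0 = 0" and "of_nat (a i0) * F 1 \<in> \<int>"
    and "\<forall>t. 0 \<le> t \<and> t \<le> 1 \<longrightarrow> \<pi> t = wadd (\<pi>' t) (wsmul (F t) dlt)"
  shows "\<forall>w \<in> weyl A i0 (a i0). \<forall>t. 0 \<le> t \<and> t \<le> 1 \<longrightarrow>
           Sw A i0 (a i0) w \<pi> t = wadd (Sw A i0 (a i0) w \<pi>' t) (wsmul (F t) dlt)"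
proof -
  have diag: "\<forall>j. A j j = 2" using assms(1) unfolding affine_gcm_def gcm_def by blast
  have "delta_shift F \<pi> \<pi>'" using assms(10) unfolding delta_shift_def .
  then have "delta_shift F (Sword A i0 (a i0) js \<pi>) (Sword A i0 (a i0) js \<pi>')" for js
    using Sword_step[where A = A, OF pl_path_paths[OF assms(5)] _ diag] by blast
  then show ?thesis unfolding Sw_def delta_shift_def by blast
qed

end
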